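(* For $n\ge2$ and all $P,Q\in\Gamma_n$, $\frac18 J(P\|Q)\le T(P\|Q)$.
   Context: $\Gamma_n=\{P=(p_1,\dots,p_n): p_i>0,\ \sum p_i=1\}$. $J(P\|Q)=\sum_{i=1}^n(p_i-q_i)\ln\frac{p_i}{q_i}$; $T(P\|Q)=\sum_{i=1}^n\frac{p_i+q_i}{2}\ln\frac{p_i+q_i}{2\sqrt{p_iq_i}}$ (natural logarithm). *)

theory Defs
  imports Complex_Main
begin

definition Gamma :: "nat \<Rightarrow> (nat \<Rightarrow> real) set" where
  "Gamma n = {p. (\<forall>i<n. p i > 0) \<and> (\<Sum>i<n. p i) = 1}"

definition J_div :: "nat \<Rightarrow> (nat \<Rightarrow> real) \<Rightarrow> (nat \<Rightarrow> real) \<Rightarrow> real" where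
  "J_div n p q = (\<Sum>i<n. (p i - q i) * ln (p i / q i))"

definition T_div :: "nat \<Rightarrow> (nat \<Rightarrow> real) \<Rightarrow> (nat \<Rightarrow> real) \<Rightarrow> real" where
  "T_div n p q = (\<Sum>i<n. (p i + q i) / 2 * ln ((p i + q i) / (2 * sqrt (p i * q i))))"

end

theory Submission
  imports Defs "HOL-Analysis.Convex"
begin

(* Both divergences are sums of perspectives q f(p/q), with generators
   f_J r = (r - 1) ln r and f_T r = (r + 1)/2 ln ((r + 1)/(2 sqrt r)), so it suffices
   to show f_J/8 <= f_T on (0, oo). The difference
   f_T - f_J/8 = (r + 1)/2 ln ((r + 1)/2) - (3r + 1)/8 ln r
   vanishes together with its derivative at r = 1 and has second derivative
   (r - 1)^2/(8 r^2 (r + 1)) >= 0, hence is nonnegative by convexity.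
   Only positivity of the entries is used, not n >= 2 or the normalisation. *)

lemma weighted_ln_le_midpoint_ln:
  fixes r :: real
  assumes "0 < r"
  shows "(3 * r + 1) / 8 * ln r \<le> (r + 1) / 2 * ln ((r + 1) / 2)"
proof -
  define f where "f x = (x + 1) / 2 * ln ((x + 1) / 2) - (3 * x + 1) / 8 * ln x" for x :: real
  define f' where "f' x = ln ((x + 1) / 2) / 2 + 1 / 2 - 3 / 8 * ln x - (3 * x + 1) / (8 * x)"
    for x :: real
  define f'' where "f'' x = (x - 1)\<^sup>2 / (8 * x\<^sup>2 * (x + 1))" for x :: real
  have "\<And>x. 0 < x \<Longrightarrow> DERIV f x :> f' x"
    unfolding f_def f'_def
    by (rule derivative_eq_intros refl | simp)+ (simp add: divide_simps, simp add: algebra_simps)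
  moreover have "\<And>x. 0 < x \<Longrightarrow> DERIV f' x :> f'' x"
    unfolding f'_def f''_def
    by (rule derivative_eq_intros refl | simp)+
      (simp add: divide_simps power2_eq_square, simp add: algebra_simps)
  moreover have "\<And>x. 0 < x \<Longrightarrow> f'' x \<ge> 0"
    by (simp add: f''_def)
  ultimately have "f' 1 * (r - 1) \<le> f r - f 1"
    using assms by (intro f''_imp_f'[of "{0<..}"]) auto
  then show ?thesis
    by (simp add: f_def f'_def)
qed

lemma J_generator_le_T_generator:
  fixes r :: real
  assumes "0 < r"
  shows "(r - 1) * ln r / 8 \<le> (r + 1) / 2 * ln ((r + 1) / (2 * sqrt r))"
proof -
  have "ln ((r + 1) / (2 * sqrt r)) = ln ((r + 1) / 2) - ln r / 2"
    using assms by (simp add: ln_div ln_mult ln_sqrt)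
  then show ?thesis
    using weighted_ln_le_midpoint_ln[OF assms] by (simp only:) (simp add: field_simps)
qed

lemma J_term_le_T_term:
  fixes a b :: real
  assumes "0 < a" and "0 < b"
  shows "(a - b) * ln (a / b) / 8 \<le> (a + b) / 2 * ln ((a + b) / (2 * sqrt (a * b)))"
proof -
  define r where "r = a / b"
  have r: "0 < r" and a: "a = b * r"
    using assms by (simp_all add: r_def)
  have "sqrt (a * b) = b * sqrt r"
    using assms by (simp add: a real_sqrt_mult)
  then have "(a + b) / (2 * sqrt (a * b)) = (r + 1) / (2 * sqrt r)"
    using assms r by (simp add: a field_simps)
  moreover have "b * ((r - 1) * ln r / 8) \<le> b * ((r + 1) / 2 * ln ((r + 1) / (2 * sqrt r)))"
    using J_generator_le_T_generator[OF r] assms(2) by simp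
  ultimately show ?thesis
    by (simp add: a algebra_simps)
qed

theorem proposition3p4:
  fixes n :: nat and p q :: "nat \<Rightarrow> real"
  assumes "n \<ge> 2" and "p \<in> Gamma n" and "q \<in> Gamma n"
  shows "J_div n p q / 8 \<le> T_div n p q"
proof -
  have pos: "0 < p i" "0 < q i" if "i < n" for i
    using assms(2,3) that by (auto simp: Gamma_def)
  have "J_div n p q / 8 = (\<Sum>i<n. (p i - q i) * ln (p i / q i) / 8)"
    by (simp add: J_div_def sum_divide_distrib)
  also have "\<dots> \<le> T_div n p q"
    unfolding T_div_def by (intro sum_mono J_term_le_T_term) (simp_all add: pos)
  finally show ?thesis .
qed

end
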